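(* Let $G=(U,\alpha)$ and $H=(V,\beta)$ be connected graphs with degree functions $p$ and $q$. If $\gamma$ is a weight function on $U\times V$ with degree function $r(u,v)=\sum_{(u',v')\in U\times V}\gamma((u,v),(u',v'))$ satisfying, for all $u,u'\in U$ and $v,v'\in V$, $p(u)\sum_{\tilde v\in V}\gamma((u,v),(u',\tilde v))=\alpha(u,u')\,r(u,v)$ and $q(v)\sum_{\tilde u\in U}\gamma((u,v),(\tilde u,v'))=\beta(v,v')\,r(u,v)$, then $\sum_{v\in V}r(u,v)=p(u)$ for all $u\in U$ and $\sum_{u\in U}r(u,v)=q(v)$ for all $v\in V$.
   Context: A weight function on a finite set $U$ is $\alpha:U\times U\to\mathbb{R}$ with $\alpha\ge0$, $\alpha(u,u')=\alpha(u',u)$, and $\sum_{u,u'}\alpha(u,u')=1$; its degree function is $p(u)=\sum_{u'}\alpha(u,u')$. A graph is $(U,\alpha)$; it is connected if any two distinct vertices are joined by a path of edges $(u,u')$ with $\alpha(u,u')>0$. *)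

theory Defs
  imports Complex_Main
begin

definition weight_fun :: "'a set \<Rightarrow> ('a \<Rightarrow> 'a \<Rightarrow> real) \<Rightarrow> bool" where
  "weight_fun U \<alpha> \<longleftrightarrow> finite U \<and>
     (\<forall>u\<in>U. \<forall>u'\<in>U. \<alpha> u u' \<ge> 0) \<and>
     (\<forall>u\<in>U. \<forall>u'\<in>U. \<alpha> u u' = \<alpha> u' u) \<and>
     (\<Sum>u\<in>U. \<Sum>u'\<in>U. \<alpha> u u') = 1"

definition degree_fun :: "'a set \<Rightarrow> ('a \<Rightarrow> 'a \<Rightarrow> real) \<Rightarrow> 'a \<Rightarrow> real" where
  "degree_fun U \<alpha> u = (\<Sum>u'\<in>U. \<alpha> u u')"

definition edges :: "'a set \<Rightarrow> ('a \<Rightarrow> 'a \<Rightarrow> real) \<Rightarrow> ('a \<times> 'a) set" where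
  "edges U \<alpha> = {(u, u'). u \<in> U \<and> u' \<in> U \<and> \<alpha> u u' > 0}"

definition connected_graph :: "'a set \<Rightarrow> ('a \<Rightarrow> 'a \<Rightarrow> real) \<Rightarrow> bool" where
  "connected_graph U \<alpha> \<longleftrightarrow>
     (\<forall>u\<in>U. \<forall>u'\<in>U. u \<noteq> u' \<longrightarrow> (u, u') \<in> (edges U \<alpha>)\<^sup>+)"

end

theory Submission
  imports Defs
begin

text \<open>Summing the first coupling identity over v shows that the U-marginal R(u) = sum_v r(u,v)
  is in detailed balance with the graph G: p(u) M(u,u') = alpha(u,u') R(u) for the symmetric
  matrix M(u,u') = sum_{v,v'} gamma((u,v),(u',v')). Hence R/p takes the same value at both ends
  of every edge, so it is constant on the connected graph G, and since R and p both have total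
  mass 1 the constant is 1. The V-marginal is handled by exchanging the two factors.\<close>

lemma sum_degree_fun:
  assumes "weight_fun U \<alpha>"
  shows "(\<Sum>u\<in>U. degree_fun U \<alpha> u) = 1"
  using assms by (simp add: weight_fun_def degree_fun_def)

lemma weight_le_degree_fun:
  assumes "weight_fun U \<alpha>" "u \<in> U" "u' \<in> U"
  shows "\<alpha> u u' \<le> degree_fun U \<alpha> u"
  using assms member_le_sum[of u' U "\<alpha> u"] by (auto simp: weight_fun_def degree_fun_def)

lemma degree_fun_pos:
  assumes wf: "weight_fun U \<alpha>" and conn: "connected_graph U \<alpha>" and u: "u \<in> U"
  shows "0 < degree_fun U \<alpha> u"
proof (cases "U = {u}")
  case True
  then show ?thesis using sum_degree_fun[OF wf] by simp
next
  case False
  then obtain u' where "u' \<in> U" "u \<noteq> u'" using u by blast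
  then have "(u, u') \<in> (edges U \<alpha>)\<^sup>+"
    using conn u by (auto simp: connected_graph_def)
  then obtain w where "(u, w) \<in> edges U \<alpha>" by (auto dest: tranclD)
  then show ?thesis
    using weight_le_degree_fun[OF wf, of u w] by (auto simp: edges_def)
qed

lemma connected_graph_constant:
  assumes conn: "connected_graph U \<alpha>"
    and edge: "\<And>u u'. (u, u') \<in> edges U \<alpha> \<Longrightarrow> f u = f u'"
    and "u \<in> U" "u' \<in> U"
  shows "f u = f u'"
proof (cases "u = u'")
  case False
  then have "(u, u') \<in> (edges U \<alpha>)\<^sup>+"
    using assms by (auto simp: connected_graph_def)
  then show ?thesis by (induction rule: trancl_induct) (auto dest: edge)
qed simp

lemma detailed_balance_eq_degree_fun:
  fixes R :: "'a \<Rightarrow> real"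
  assumes wf: "weight_fun U \<alpha>" and conn: "connected_graph U \<alpha>"
    and balance: "\<And>u u'. u \<in> U \<Longrightarrow> u' \<in> U \<Longrightarrow> degree_fun U \<alpha> u * M u u' = \<alpha> u u' * R u"
    and M_sym: "\<And>u u'. u \<in> U \<Longrightarrow> u' \<in> U \<Longrightarrow> M u u' = M u' u"
    and R_total: "sum R U = 1"
    and u: "u \<in> U"
  shows "R u = degree_fun U \<alpha> u"
proof -
  define p where "p = degree_fun U \<alpha>"
  have p_pos: "p x > 0" if "x \<in> U" for x
    using degree_fun_pos[OF wf conn that] by (simp add: p_def)
  have ratio_edge: "R x / p x = R y / p y" if "(x, y) \<in> edges U \<alpha>" for x y
  proof -
    from that have xy: "x \<in> U" "y \<in> U" "\<alpha> x y > 0" by (auto simp: edges_def)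
    have "\<alpha> y x = \<alpha> x y" using wf xy by (simp add: weight_fun_def)
    then have "p x * M x y = \<alpha> x y * R x" "p y * M x y = \<alpha> x y * R y"
      using balance[of x y] balance[of y x] M_sym[of y x] xy by (simp_all add: p_def)
    moreover have "p x > 0" "p y > 0" using p_pos xy by auto
    ultimately have "R x / p x = M x y / \<alpha> x y" "R y / p y = M x y / \<alpha> x y"
      using xy(3) by (simp_all add: field_simps)
    then show ?thesis by simp
  qed
  define c where "c = R u / p u"
  have R_eq: "R x = c * p x" if "x \<in> U" for x
  proof -
    have "R x / p x = c"
      using connected_graph_constant[where f = "\<lambda>x. R x / p x", OF conn ratio_edge that u]
      by (simp add: c_def)
    then show ?thesis using p_pos[OF that] by (simp add: field_simps)
  qed
  have "1 = (\<Sum>x\<in>U. c * p x)"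
    unfolding R_total[symmetric] by (rule sum.cong[OF refl R_eq])
  also have "\<dots> = c"
    using sum_degree_fun[OF wf] by (simp add: p_def flip: sum_distrib_left)
  finally have "c = 1" ..
  then show ?thesis using R_eq[OF u] by (simp add: p_def)
qed

lemma first_marginal_eq_degree_fun:
  fixes \<gamma> :: "'a \<times> 'b \<Rightarrow> 'a \<times> 'b \<Rightarrow> real"
  assumes G: "weight_fun U \<alpha>" "connected_graph U \<alpha>"
    and W: "weight_fun (U \<times> V) \<gamma>"
    and coupling: "\<And>u u' v. u \<in> U \<Longrightarrow> u' \<in> U \<Longrightarrow> v \<in> V \<Longrightarrow>
        degree_fun U \<alpha> u * (\<Sum>v'\<in>V. \<gamma> (u, v) (u', v'))
          = \<alpha> u u' * degree_fun (U \<times> V) \<gamma> (u, v)"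
    and u: "u \<in> U"
  shows "(\<Sum>v\<in>V. degree_fun (U \<times> V) \<gamma> (u, v)) = degree_fun U \<alpha> u"
proof (rule detailed_balance_eq_degree_fun[OF G _ _ _ u])
  show "degree_fun U \<alpha> x * (\<Sum>v\<in>V. \<Sum>v'\<in>V. \<gamma> (x, v) (y, v'))
      = \<alpha> x y * (\<Sum>v\<in>V. degree_fun (U \<times> V) \<gamma> (x, v))" if "x \<in> U" "y \<in> U" for x y
    using coupling that by (simp add: sum_distrib_left)
  show "(\<Sum>v\<in>V. \<Sum>v'\<in>V. \<gamma> (x, v) (y, v')) = (\<Sum>v\<in>V. \<Sum>v'\<in>V. \<gamma> (y, v) (x, v'))"
    if "x \<in> U" "y \<in> U" for x y
  proof -
    have "(\<Sum>v\<in>V. \<Sum>v'\<in>V. \<gamma> (x, v) (y, v')) = (\<Sum>v\<in>V. \<Sum>v'\<in>V. \<gamma> (y, v') (x, v))"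
      using W that by (intro sum.cong) (auto simp: weight_fun_def)
    also have "\<dots> = (\<Sum>v'\<in>V. \<Sum>v\<in>V. \<gamma> (y, v') (x, v))"
      by (rule sum.swap)
    finally show ?thesis .
  qed
  show "(\<Sum>x\<in>U. \<Sum>v\<in>V. degree_fun (U \<times> V) \<gamma> (x, v)) = 1"
    using sum_degree_fun[OF W] by (simp add: sum.cartesian_product split_def)
qed

lemma sum_product_swap: "(\<Sum>x\<in>B \<times> A. f x) = (\<Sum>x\<in>A \<times> B. f (prod.swap x))"
  using sum.reindex[of prod.swap "A \<times> B" f] by (simp add: product_swap)

lemma degree_fun_product_swap:
  "degree_fun (V \<times> U) (\<lambda>x y. \<gamma> (prod.swap x) (prod.swap y)) (v, u)
     = degree_fun (U \<times> V) \<gamma> (u, v)"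
  unfolding degree_fun_def by (subst sum_product_swap) simp

lemma weight_fun_product_swap:
  assumes "weight_fun (U \<times> V) \<gamma>"
  shows "weight_fun (V \<times> U) (\<lambda>x y. \<gamma> (prod.swap x) (prod.swap y))"
proof -
  have "(\<Sum>x\<in>V \<times> U. \<Sum>y\<in>V \<times> U. \<gamma> (prod.swap x) (prod.swap y)) = (\<Sum>x\<in>U \<times> V. \<Sum>y\<in>U \<times> V. \<gamma> x y)"
    by (simp only: sum_product_swap[of _ V U] swap_swap)
  moreover have "finite (V \<times> U)"
    using assms finite_imageI[of "U \<times> V" prod.swap] by (simp add: weight_fun_def product_swap)
  ultimately show ?thesis using assms by (auto simp: weight_fun_def)
qed

theorem proposition2p5:
  fixes U :: "'a set" and V :: "'b set"
    and \<alpha> :: "'a \<Rightarrow> 'a \<Rightarrow> real" and \<beta> :: "'b \<Rightarrow> 'b \<Rightarrow> real"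
    and \<gamma> :: "'a \<times> 'b \<Rightarrow> 'a \<times> 'b \<Rightarrow> real"
  assumes G: "weight_fun U \<alpha>" "connected_graph U \<alpha>"
    and H: "weight_fun V \<beta>" "connected_graph V \<beta>"
    and W: "weight_fun (U \<times> V) \<gamma>"
    and cp: "\<And>u u' v v'. u \<in> U \<Longrightarrow> u' \<in> U \<Longrightarrow> v \<in> V \<Longrightarrow> v' \<in> V \<Longrightarrow>
        degree_fun U \<alpha> u * (\<Sum>vt\<in>V. \<gamma> (u, v) (u', vt))
          = \<alpha> u u' * degree_fun (U \<times> V) \<gamma> (u, v)"
    and cq: "\<And>u u' v v'. u \<in> U \<Longrightarrow> u' \<in> U \<Longrightarrow> v \<in> V \<Longrightarrow> v' \<in> V \<Longrightarrow>
        degree_fun V \<beta> v * (\<Sum>ut\<in>U. \<gamma> (u, v) (ut, v'))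
          = \<beta> v v' * degree_fun (U \<times> V) \<gamma> (u, v)"
  shows "(\<forall>u\<in>U. (\<Sum>v\<in>V. degree_fun (U \<times> V) \<gamma> (u, v)) = degree_fun U \<alpha> u) \<and>
         (\<forall>v\<in>V. (\<Sum>u\<in>U. degree_fun (U \<times> V) \<gamma> (u, v)) = degree_fun V \<beta> v)"
proof (intro conjI ballI)
  show "(\<Sum>v\<in>V. degree_fun (U \<times> V) \<gamma> (u, v)) = degree_fun U \<alpha> u" if "u \<in> U" for u
    using cp by (intro first_marginal_eq_degree_fun[OF G W _ that]) blast
  have "(\<Sum>u\<in>U. degree_fun (V \<times> U) (\<lambda>x y. \<gamma> (prod.swap x) (prod.swap y)) (v, u))
      = degree_fun V \<beta> v" if "v \<in> V" for v
    using cq by (intro first_marginal_eq_degree_fun[OF H weight_fun_product_swap[OF W] _ that])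
      (simp add: degree_fun_product_swap)
  then show "(\<Sum>u\<in>U. degree_fun (U \<times> V) \<gamma> (u, v)) = degree_fun V \<beta> v" if "v \<in> V" for v
    using that by (simp add: degree_fun_product_swap)
qed

end
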